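(* Let $L\ge1$ be an integer, let $K_1,\dots,K_L\subseteq[N]$ be pairwise disjoint, $x_0=\sum_{i=1}^L i\,\mathbb{1}_{K_i}$, $K=\bigcup_{i=1}^LK_i$, and $A\in\mathbb{R}^{m\times N}$. The following are equivalent: (i) $\ker(A)\cap N^+\cap H_{K_L,K^C}=\{0\}$; (ii) $x_0$ is the unique solution of $\min\|x\|_1$ subject to $Ax=Ax_0$ and $x\in[0,L]^N$.
   Context: $\mathbb{1}_S$ has entries $1$ on $S$, $0$ elsewhere; $K^C=[N]\setminus K$. $N^+=\{w\in\mathbb{R}^N:\sum_{i=1}^Nw_i\le0\}$, $H_{K_L,K^C}=\{w\in\mathbb{R}^N: w_i\le0\text{ for } i\in K_L,\ w_i\ge0\text{ for } i\in K^C\}$. "Unique solution" means unique minimizer. *)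

theory Defs
  imports "HOL-Analysis.Analysis"
begin

definition l1norm :: "real^'n \<Rightarrow> real" where
  "l1norm x = (\<Sum>j\<in>UNIV. \<bar>x $ j\<bar>)"

definition indic_vec :: "'n set \<Rightarrow> real^'n" where
  "indic_vec S = (\<chi> j. if j \<in> S then 1 else 0)"

definition kernel :: "real^'n^'m \<Rightarrow> (real^'n) set" where
  "kernel A = {w. A *v w = 0}"

definition Nplus :: "(real^'n) set" where
  "Nplus = {w. (\<Sum>i\<in>UNIV. w $ i) \<le> 0}"

definition Hcone :: "'n set \<Rightarrow> 'n set \<Rightarrow> (real^'n) set" where
  "Hcone KL KC = {w. (\<forall>i\<in>KL. w $ i \<le> 0) \<and> (\<forall>i\<in>KC. w $ i \<ge> 0)}"

definition unique_minimizer :: "('a \<Rightarrow> real) \<Rightarrow> 'a set \<Rightarrow> 'a \<Rightarrow> bool" where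
  "unique_minimizer f S x \<longleftrightarrow> x \<in> S \<and> (\<forall>y\<in>S. f x \<le> f y) \<and> (\<forall>y\<in>S. f y \<le> f x \<longrightarrow> y = x)"

end

theory Submission
  imports Defs
begin

text \<open>On the box \<open>[0,L]\<^sup>N\<close> the \<open>\<ell>\<^sub>1\<close>-norm is the linear functional \<open>x \<mapsto> \<Sum>\<^sub>j x\<^sub>j\<close>,
  so \<open>x\<^sub>0\<close> is the unique minimiser iff no nonzero feasible direction \<open>w\<close> of the box at \<open>x\<^sub>0\<close>
  has \<open>Aw = 0\<close> and \<open>\<Sum>\<^sub>j w\<^sub>j \<le> 0\<close>. Up to scaling, the feasible directions are exactly the vectors
  that are nonpositive where \<open>x\<^sub>0\<close> attains the upper bound and nonnegative where it vanishes;
  for \<open>x\<^sub>0 = \<Sum>\<^sub>i i \<cdot> \<one>\<^bsub>K i\<^esub>\<close> these coordinate sets are \<open>K\<^sub>L\<close> and \<open>K\<^sup>C\<close>.\<close>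

lemma unique_minimizer_iff:
  fixes f :: "'a \<Rightarrow> real"
  shows "unique_minimizer f S x \<longleftrightarrow> x \<in> S \<and> (\<forall>y\<in>S. f y \<le> f x \<longrightarrow> y = x)"
  unfolding unique_minimizer_def by (metis nle_le)

lemma l1norm_eq_sum_if_nonneg:
  assumes "\<forall>j. 0 \<le> x $ j"
  shows "l1norm x = (\<Sum>j\<in>UNIV. x $ j)"
  unfolding l1norm_def using assms by (intro sum.cong) auto

lemma sum_indic_vec_component_in:
  assumes "finite I" "disjoint_family_on K I" "i \<in> I" "j \<in> K i"
  shows "(\<Sum>k\<in>I. c k *\<^sub>R indic_vec (K k)) $ j = c i"
proof -
  have "(\<Sum>k\<in>I. c k *\<^sub>R indic_vec (K k)) $ j = (\<Sum>k\<in>I. c k * (if j \<in> K k then 1 else 0))"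
    by (simp add: indic_vec_def)
  also have "\<dots> = (\<Sum>k\<in>I. if k = i then c k else 0)"
    using assms(2-4) unfolding disjoint_family_on_def by (intro sum.cong) fastforce+
  finally show ?thesis
    using assms(1,3) by simp
qed

lemma sum_indic_vec_component_notin:
  assumes "j \<notin> (\<Union>k\<in>I. K k)"
  shows "(\<Sum>k\<in>I. c k *\<^sub>R indic_vec (K k)) $ j = 0"
  using assms unfolding indic_vec_def by (auto intro!: sum.neutral)

lemma eventually_at_right_0_nonneg_affine:
  fixes a c :: real
  assumes "0 < a \<or> (a = 0 \<and> 0 \<le> c)"
  shows "\<forall>\<^sub>F t in at_right 0. 0 \<le> a + t * c"
  using assms
proof
  assume "0 < a"
  have "((\<lambda>t. a + t * c) \<longlongrightarrow> a) (at_right 0)"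
    by (auto intro!: tendsto_eq_intros)
  from order_tendstoD(1)[OF this \<open>0 < a\<close>] show ?thesis
    by (rule eventually_mono) simp
next
  assume "a = 0 \<and> 0 \<le> c"
  then show ?thesis
    using eventually_at_right_less[of "0::real"] by (auto elim: eventually_mono)
qed

lemma box_feasible_direction:
  fixes x w :: "real^'n::finite"
  assumes box: "\<forall>j. 0 \<le> x $ j \<and> x $ j \<le> b"
    and cone: "w \<in> Hcone {j. x $ j = b} {j. x $ j = 0}"
  shows "\<exists>t>0. \<forall>j. 0 \<le> (x + t *\<^sub>R w) $ j \<and> (x + t *\<^sub>R w) $ j \<le> b"
proof -
  have "\<forall>\<^sub>F t in at_right 0. 0 \<le> x $ j + t * w $ j \<and> 0 \<le> (b - x $ j) + t * (- w $ j)" for j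
  proof (intro eventually_conj eventually_at_right_0_nonneg_affine)
    have "x $ j = 0 \<Longrightarrow> 0 \<le> w $ j" "x $ j = b \<Longrightarrow> w $ j \<le> 0"
      using cone by (auto simp: Hcone_def)
    moreover have "0 \<le> x $ j" "x $ j \<le> b"
      using box by auto
    ultimately show "0 < x $ j \<or> (x $ j = 0 \<and> 0 \<le> w $ j)"
      and "0 < b - x $ j \<or> (b - x $ j = 0 \<and> 0 \<le> - w $ j)"
      by auto
  qed
  then have "\<forall>\<^sub>F t in at_right 0. \<forall>j. 0 \<le> x $ j + t * w $ j \<and> 0 \<le> (b - x $ j) + t * (- w $ j)"
    by (rule eventually_all_finite)
  then have "\<forall>\<^sub>F t in at_right 0. 0 < t \<and> (\<forall>j. 0 \<le> x $ j + t * w $ j \<and> 0 \<le> (b - x $ j) + t * (- w $ j))"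
    by (intro eventually_conj eventually_at_right_less)
  then obtain t where "0 < t" "\<forall>j. 0 \<le> x $ j + t * w $ j \<and> 0 \<le> (b - x $ j) + t * (- w $ j)"
    using eventually_happens'[OF trivial_limit_at_right_real] by blast
  then show ?thesis
    by (intro exI[of _ t]) (simp add: le_diff_eq add.commute)
qed

context
  fixes A :: "real^'n::finite^'m" and x0 :: "real^'n" and b :: real
  assumes x0_in_box: "\<forall>j. 0 \<le> x0 $ j \<and> x0 $ j \<le> b"
begin

lemma unique_l1_minimizer_if_null_space_property:
  assumes "kernel A \<inter> Nplus \<inter> Hcone {j. x0 $ j = b} {j. x0 $ j = 0} = {0}"
  shows "unique_minimizer l1norm {x. A *v x = A *v x0 \<and> (\<forall>j. 0 \<le> x $ j \<and> x $ j \<le> b)} x0"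
  unfolding unique_minimizer_iff
proof (intro conjI ballI impI)
  fix y assume y: "y \<in> {x. A *v x = A *v x0 \<and> (\<forall>j. 0 \<le> x $ j \<and> x $ j \<le> b)}"
    and le: "l1norm y \<le> l1norm x0"
  have "y - x0 \<in> kernel A"
    using y by (simp add: kernel_def matrix_vector_mult_diff_distrib)
  moreover have "y - x0 \<in> Nplus"
  proof -
    have "l1norm y = (\<Sum>j\<in>UNIV. y $ j)" "l1norm x0 = (\<Sum>j\<in>UNIV. x0 $ j)"
      using y x0_in_box by (auto intro: l1norm_eq_sum_if_nonneg)
    then show ?thesis
      using le by (simp add: Nplus_def sum_subtractf)
  qed
  moreover have "y - x0 \<in> Hcone {j. x0 $ j = b} {j. x0 $ j = 0}"
    using y by (simp add: Hcone_def)
  ultimately have "y - x0 \<in> {0}"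
    using assms by blast
  then show "y = x0"
    by simp
qed (use x0_in_box in blast)

lemma null_space_property_if_unique_l1_minimizer:
  assumes "unique_minimizer l1norm {x. A *v x = A *v x0 \<and> (\<forall>j. 0 \<le> x $ j \<and> x $ j \<le> b)} x0"
  shows "kernel A \<inter> Nplus \<inter> Hcone {j. x0 $ j = b} {j. x0 $ j = 0} = {0}"
proof (intro equalityI subsetI)
  fix w assume w: "w \<in> kernel A \<inter> Nplus \<inter> Hcone {j. x0 $ j = b} {j. x0 $ j = 0}"
  obtain t where t: "0 < t" and y_in_box: "\<forall>j. 0 \<le> (x0 + t *\<^sub>R w) $ j \<and> (x0 + t *\<^sub>R w) $ j \<le> b"
    using box_feasible_direction[OF x0_in_box] w by blast
  have "A *v (x0 + t *\<^sub>R w) = A *v x0"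
    using w by (simp add: kernel_def matrix_vector_right_distrib matrix_vector_mult_scaleR)
  moreover have "l1norm (x0 + t *\<^sub>R w) \<le> l1norm x0"
  proof -
    have "l1norm (x0 + t *\<^sub>R w) = l1norm x0 + t * (\<Sum>j\<in>UNIV. w $ j)"
      using x0_in_box y_in_box
      by (simp add: l1norm_eq_sum_if_nonneg sum.distrib sum_distrib_left)
    also have "\<dots> \<le> l1norm x0"
      using w t by (simp add: Nplus_def mult_nonneg_nonpos)
    finally show ?thesis .
  qed
  ultimately have "x0 + t *\<^sub>R w = x0"
    using assms y_in_box unfolding unique_minimizer_iff by blast
  then show "w \<in> {0}"
    using t by simp
qed (simp add: kernel_def Nplus_def Hcone_def)

end

definition staircase_vec :: "nat \<Rightarrow> (nat \<Rightarrow> 'n set) \<Rightarrow> real^'n::finite" where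
  "staircase_vec L K = (\<Sum>i=1..L. of_nat i *\<^sub>R indic_vec (K i))"

context
  fixes L :: nat and K :: "nat \<Rightarrow> 'n::finite set"
  assumes disjoint: "disjoint_family_on K {1..L}"
begin

lemma staircase_vec_component_in:
  "i \<in> {1..L} \<Longrightarrow> j \<in> K i \<Longrightarrow> staircase_vec L K $ j = real i"
  unfolding staircase_vec_def using sum_indic_vec_component_in[OF _ disjoint] by simp

lemma staircase_vec_component_notin:
  "j \<notin> (\<Union>i\<in>{1..L}. K i) \<Longrightarrow> staircase_vec L K $ j = 0"
  unfolding staircase_vec_def by (rule sum_indic_vec_component_notin)

lemma staircase_vec_in_box: "0 \<le> staircase_vec L K $ j \<and> staircase_vec L K $ j \<le> real L"
  by (cases "j \<in> (\<Union>i\<in>{1..L}. K i)")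
    (auto simp: staircase_vec_component_in staircase_vec_component_notin)

lemma staircase_vec_eq_top:
  assumes "L \<ge> 1"
  shows "{j. staircase_vec L K $ j = real L} = K L"
proof (intro equalityI subsetI)
  fix j assume "j \<in> {j. staircase_vec L K $ j = real L}"
  with assms obtain i where "i \<in> {1..L}" "j \<in> K i" "staircase_vec L K $ j = real L"
    using staircase_vec_component_notin by fastforce
  then show "j \<in> K L"
    using staircase_vec_component_in by force
qed (use assms staircase_vec_component_in in simp)

lemma staircase_vec_eq_zero: "{j. staircase_vec L K $ j = 0} = UNIV - (\<Union>i\<in>{1..L}. K i)"
  using staircase_vec_component_in staircase_vec_component_notin by force

end

theorem theorem4p2:
  fixes L :: nat and K :: "nat \<Rightarrow> 'n::finite set" and A :: "real^'n^'m"
  assumes "L \<ge> 1"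
    and "\<And>i j. i \<in> {1..L} \<Longrightarrow> j \<in> {1..L} \<Longrightarrow> i \<noteq> j \<Longrightarrow> K i \<inter> K j = {}"
  defines "x0 \<equiv> (\<Sum>i=1..L. of_nat i *\<^sub>R indic_vec (K i))"
    and "KK \<equiv> (\<Union>i\<in>{1..L}. K i)"
  shows "kernel A \<inter> Nplus \<inter> Hcone (K L) (UNIV - KK) = {0}
     \<longleftrightarrow> unique_minimizer l1norm
           {x. A *v x = A *v x0 \<and> (\<forall>j. 0 \<le> x $ j \<and> x $ j \<le> real L)} x0"
proof -
  have disjoint: "disjoint_family_on K {1..L}"
    using assms(2) unfolding disjoint_family_on_def by blast
  have x0: "x0 = staircase_vec L K"
    unfolding x0_def staircase_vec_def ..
  have x0_in_box: "\<forall>j. 0 \<le> x0 $ j \<and> x0 $ j \<le> real L"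
    unfolding x0 using staircase_vec_in_box[OF disjoint] by blast
  have "Hcone (K L) (UNIV - KK) = Hcone {j. x0 $ j = real L} {j. x0 $ j = 0}"
    unfolding x0 KK_def staircase_vec_eq_top[OF disjoint \<open>L \<ge> 1\<close>] staircase_vec_eq_zero[OF disjoint] ..
  then show ?thesis
    using unique_l1_minimizer_if_null_space_property[OF x0_in_box]
      null_space_property_if_unique_l1_minimizer[OF x0_in_box] by (intro iffI) simp_all
qed

end
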